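(* Let $n\ge 2$ and let $(W_r)_{r\in\mathbb Z}$ be a generalized $n$-step Fibonacci sequence. Then for every integer $r$ and every non-negative integer $k$, \[ \sum_{j=0}^k(-1)^jW_{r-k+j}+(n\bmod 2)\sum_{j=0}^k(-1)^jW_{r-k-n-1+j} =(-1)^k\sum_{j=1}^{\lceil n/2\rceil}W_{r-2j+1}+\sum_{j=1}^{\lceil n/2\rceil}W_{r-2j-k}. \]
   Context: Fix an integer $n\ge 2$. A generalized $n$-step Fibonacci sequence is a two-sided sequence $(W_r)_{r\in\mathbb Z}$ of complex numbers satisfying $W_r=\sum_{i=1}^n W_{r-i}$ for all $r\in\mathbb Z$. $\lceil q\rceil$ denotes the least integer $\ge q$, and $n\bmod 2\in\{0,1\}$. *)

theory Defs
  imports Complex_Main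
begin

definition gen_fib :: "nat \<Rightarrow> (int \<Rightarrow> complex) \<Rightarrow> bool" where
  "gen_fib n W \<longleftrightarrow> (\<forall>r::int. W r = (\<Sum>i=1..n. W (r - int i)))"

end

theory Submission
  imports Defs
begin

text \<open>With m = \<lceil>n/2\<rceil> we have 2m = n + (n mod 2), so pairing consecutive terms
  of the recurrence shows that G s = \<Sum>j=1..m. W (s - 2j) satisfies
  G (s + 1) + G s = W s + (n mod 2) W (s - n - 1). Both sides of the identity are
  then alternating sums of this expression, which telescope.\<close>

lemma alternating_sum_telescope:
  fixes F G :: "int \<Rightarrow> 'a::comm_ring_1"
  assumes FG: "\<And>s. F s = G (s + 1) + G s"
  shows "(\<Sum>j=0..k. (-1)^j * F (r - int k + int j)) = (-1)^k * G (r + 1) + G (r - int k)"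
proof (induction k)
  case 0
  then show ?case using FG[of r] by simp
next
  case (Suc k)
  have "(\<Sum>j=0..Suc k. (-1)^j * F (r - int (Suc k) + int j))
      = F (r - int k - 1) - (\<Sum>j=0..k. (-1)^j * F (r - int k + int j))"
    by (subst sum.atLeast0_atMost_Suc_shift) (simp add: sum_negf algebra_simps)
  also have "\<dots> = G (r - int k) + G (r - int k - 1) - ((-1)^k * G (r + 1) + G (r - int k))"
    using FG[of "r - int k - 1"] Suc.IH by simp
  also have "\<dots> = (-1)^Suc k * G (r + 1) + G (r - int (Suc k))"
    by (simp add: algebra_simps)
  finally show ?case .
qed

lemma sum_consecutive_pairs:
  fixes W :: "int \<Rightarrow> 'a::comm_monoid_add"
  shows "(\<Sum>j=1..m. W (s - 2 * int j + 1) + W (s - 2 * int j)) = (\<Sum>i=1..2*m. W (s - int i))"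
proof (induction m)
  case 0
  then show ?case by simp
next
  case (Suc m)
  have "2 * Suc m = Suc (Suc (2 * m))" by simp
  then show ?case using Suc by (simp add: algebra_simps)
qed

lemma gen_fib_sum_parity_padded:
  assumes "gen_fib n W"
  shows "(\<Sum>i=1..n + n mod 2. W (s - int i)) = W s + of_nat (n mod 2) * W (s - int n - 1)"
proof -
  have rec: "(\<Sum>i=1..n. W (s - int i)) = W s"
    using assms unfolding gen_fib_def by metis
  show ?thesis
  proof (cases "even n")
    case True
    then show ?thesis using rec by simp
  next
    case False
    then have "(\<Sum>i=1..n + n mod 2. W (s - int i)) = (\<Sum>i=1..n. W (s - int i)) + W (s - int n - 1)"
      by (simp add: odd_iff_mod_2_eq_one algebra_simps)
    then show ?thesis using rec False by (simp add: odd_iff_mod_2_eq_one)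
  qed
qed

lemma double_nat_ceiling_half: "2 * nat \<lceil>real n / 2\<rceil> = n + n mod 2"
proof (cases "even n")
  case True
  then show ?thesis by (auto elim: evenE)
next
  case False
  then obtain t where t: "n = 2 * t + 1" using oddE by blast
  then have "\<lceil>real n / 2\<rceil> = int t + 1" by (simp add: ceiling_eq_iff)
  then show ?thesis using t by simp
qed

theorem mainTheorem4:
  fixes n :: nat and W :: "int \<Rightarrow> complex" and r :: int and k :: nat
  assumes "n \<ge> 2" and "gen_fib n W"
  shows "(\<Sum>j=0..k. (-1)^j * W (r - int k + int j))
         + of_nat (n mod 2) * (\<Sum>j=0..k. (-1)^j * W (r - int k - int n - 1 + int j))
       = (-1)^k * (\<Sum>j=1..nat \<lceil>real n / 2\<rceil>. W (r - 2 * int j + 1))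
         + (\<Sum>j=1..nat \<lceil>real n / 2\<rceil>. W (r - 2 * int j - int k))"
proof -
  define m where "m = nat \<lceil>real n / 2\<rceil>"
  define F where "F s = W s + of_nat (n mod 2) * W (s - int n - 1)" for s
  define G where "G s = (\<Sum>j=1..m. W (s - 2 * int j))" for s
  have "F s = G (s + 1) + G s" for s
    using sum_consecutive_pairs[of W s m] gen_fib_sum_parity_padded[OF assms(2), of s]
    unfolding F_def G_def m_def double_nat_ceiling_half by (simp add: sum.distrib algebra_simps)
  then have "(\<Sum>j=0..k. (-1)^j * F (r - int k + int j)) = (-1)^k * G (r + 1) + G (r - int k)"
    by (rule alternating_sum_telescope)
  then show ?thesis
    unfolding F_def G_def m_def
    by (simp add: sum.distrib sum_distrib_left algebra_simps)
qed

end
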